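(* Let $m\in\mathbb N$, $M\in{\rm Mat}_m(\mathbb Z)$, and $n_1,n_2\in\mathbb N$ with $\gcd(n_1,n_2)=1$. Then $\Gamma_{M,\,n_1n_2}$ is isomorphic (as a directed graph) to the tensor product $\Gamma_{M,\,n_1}\times\Gamma_{M,\,n_2}$.
   Context: $\mathbb N$ is the set of positive integers and $\mathbb Z_n$ the integers modulo $n$. For $M\in{\rm Mat}_m(\mathbb Z)$, the move graph $\Gamma_{M,\,n}$ is the directed graph with vertex set $\mathbb Z_n^m$ and arc set $\{({\bf x},{\bf y}) : {\bf y}^T=M{\bf x}^T \text{ in } \mathbb Z_n^m\}$ (loops allowed). The tensor product $\Delta_1\times\Delta_2$ of directed graphs is the directed graph whose adjacency matrix is the Kronecker product of the adjacency matrices of $\Delta_1$ and $\Delta_2$; equivalently, its vertex set is $V(\Delta_1)\times V(\Delta_2)$ and $((u_1,u_2),(w_1,w_2))$ is an arc iff $(u_1,w_1)$ is an arc of $\Delta_1$ and $(u_2,w_2)$ is an arc of $\Delta_2$. *)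

theory Defs
  imports "HOL-Analysis.Finite_Cartesian_Product"
begin

text \<open>A directed graph (loops allowed) is represented by a pair (V, A) of a vertex
set V and an arc relation A, a set of ordered pairs of vertices.\<close>

type_synonym 'v digraph = "'v set \<times> ('v \<times> 'v) set"

text \<open>Vertices of Z_n^m: integer vectors indexed by the finite type 'm (so m = CARD('m))
with every entry a canonical residue in {0..<n}.\<close>

definition zn_vectors :: "nat \<Rightarrow> (int ^ 'm) set" where
  "zn_vectors n = {x. \<forall>i. x $ i \<in> {0..<int n}}"

definition move_graph :: "int ^ 'm ^ 'm \<Rightarrow> nat \<Rightarrow> (int ^ 'm) digraph" where
  "move_graph M n =
     (zn_vectors n,
      {(x, y). x \<in> zn_vectors n \<and> y \<in> zn_vectors n \<and>
               (\<forall>i. y $ i = (M *v x) $ i mod int n)})"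

definition tensor_product :: "'a digraph \<Rightarrow> 'b digraph \<Rightarrow> ('a \<times> 'b) digraph" where
  "tensor_product G H =
     (fst G \<times> fst H,
      {((u1, u2), (w1, w2)). (u1, w1) \<in> snd G \<and> (u2, w2) \<in> snd H})"

definition digraph_iso :: "'a digraph \<Rightarrow> 'b digraph \<Rightarrow> bool" where
  "digraph_iso G H \<longleftrightarrow>
     (\<exists>f. bij_betw f (fst G) (fst H) \<and>
          (\<forall>u\<in>fst G. \<forall>w\<in>fst G. (u, w) \<in> snd G \<longleftrightarrow> (f u, f w) \<in> snd H))"

end

theory Submission
  imports Defs "HOL-Number_Theory.Cong"
begin

text \<open>Reducing coordinatewise modulo n1 and modulo n2 identifies Z_(n1 n2)^m with
  Z_n1^m \<times> Z_n2^m by the Chinese remainder theorem. Since reduction commutes with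
  multiplication by M, this bijection carries the arcs of the move graph modulo n1 n2
  exactly onto the pairs of arcs of the move graphs modulo n1 and modulo n2.\<close>

lemma cong_mult_modulus_iff:
  fixes a b m n :: "'a :: {unique_euclidean_ring, semiring_gcd}"
  assumes "coprime m n"
  shows "[a = b] (mod m * n) \<longleftrightarrow> [a = b] (mod m) \<and> [a = b] (mod n)"
  using assms coprime_cong_mult cong_modulus_mult cong_modulus_mult[of a b n m]
  by (auto simp: ac_simps)

definition vec_mod :: "int ^ 'm \<Rightarrow> nat \<Rightarrow> int ^ 'm" where
  "vec_mod x n = (\<chi> i. x $ i mod int n)"

lemma vec_mod_eq_iff_cong: "vec_mod x n = vec_mod y n \<longleftrightarrow> (\<forall>i. [x $ i = y $ i] (mod int n))"
  by (simp add: vec_mod_def vec_eq_iff cong_def)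

lemma vec_mod_in_zn_vectors: "n > 0 \<Longrightarrow> vec_mod x n \<in> zn_vectors n"
  by (simp add: vec_mod_def zn_vectors_def)

lemma vec_mod_zn_vectors: "x \<in> zn_vectors n \<Longrightarrow> vec_mod x n = x"
  by (simp add: vec_mod_def zn_vectors_def vec_eq_iff)

lemma vec_mod_vec_mod_dvd: "m dvd n \<Longrightarrow> vec_mod (vec_mod x n) m = vec_mod x m"
  by (simp add: vec_mod_def mod_mod_cancel)

lemma vec_mod_matrix_vector_mult: "vec_mod (M *v vec_mod x n) n = vec_mod (M *v x) n"
proof -
  have "(\<Sum>j\<in>UNIV. M $ i $ j * (x $ j mod k)) mod k = (\<Sum>j\<in>UNIV. M $ i $ j * x $ j) mod k"
    for i and k :: int
  proof -
    have "(\<Sum>j\<in>UNIV. M $ i $ j * (x $ j mod k)) mod k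
        = (\<Sum>j\<in>UNIV. M $ i $ j * (x $ j mod k) mod k) mod k"
      by (simp only: mod_sum_eq)
    also have "\<dots> = (\<Sum>j\<in>UNIV. M $ i $ j * x $ j mod k) mod k"
      by (simp only: mod_mult_right_eq)
    also have "\<dots> = (\<Sum>j\<in>UNIV. M $ i $ j * x $ j) mod k"
      by (simp only: mod_sum_eq)
    finally show ?thesis .
  qed
  then show ?thesis
    by (simp add: vec_mod_def matrix_vector_mult_def)
qed

lemma vec_mod_mult_eq_iff:
  assumes "coprime n1 n2"
  shows "vec_mod x (n1 * n2) = vec_mod y (n1 * n2) \<longleftrightarrow>
         vec_mod x n1 = vec_mod y n1 \<and> vec_mod x n2 = vec_mod y n2"
  using cong_mult_modulus_iff[of "int n1" "int n2"] assms
  by (auto simp: vec_mod_eq_iff_cong)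

lemma vec_mod_chinese_remainder:
  assumes "coprime n1 n2"
  shows "\<exists>x. vec_mod x n1 = vec_mod a n1 \<and> vec_mod x n2 = vec_mod b n2"
proof -
  have "\<forall>i. \<exists>z. [z = a $ i] (mod int n1) \<and> [z = b $ i] (mod int n2)"
    using binary_chinese_remainder_int assms by simp
  then obtain g where "\<And>i. [g i = a $ i] (mod int n1) \<and> [g i = b $ i] (mod int n2)"
    by metis
  then have "vec_mod (\<chi> i. g i) n1 = vec_mod a n1 \<and> vec_mod (\<chi> i. g i) n2 = vec_mod b n2"
    by (simp add: vec_mod_eq_iff_cong)
  then show ?thesis ..
qed

lemma bij_betw_vec_mod_pair:
  assumes "n1 > 0" "n2 > 0" "coprime n1 n2"
  shows "bij_betw (\<lambda>x :: int ^ 'm. (vec_mod x n1, vec_mod x n2))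
           (zn_vectors (n1 * n2)) (zn_vectors n1 \<times> zn_vectors n2)"
    (is "bij_betw ?f _ _")
proof (rule bij_betw_imageI)
  show "inj_on ?f (zn_vectors (n1 * n2))"
    by (rule inj_onI) (metis Pair_inject vec_mod_zn_vectors vec_mod_mult_eq_iff assms(3))
  show "?f ` zn_vectors (n1 * n2) = zn_vectors n1 \<times> zn_vectors n2"
  proof (intro equalityI subsetI)
    fix p assume "p \<in> ?f ` zn_vectors (n1 * n2)"
    with assms(1,2) show "p \<in> zn_vectors n1 \<times> zn_vectors n2"
      by (auto intro: vec_mod_in_zn_vectors)
  next
    fix p :: "(int ^ 'm) \<times> (int ^ 'm)"
    assume "p \<in> zn_vectors n1 \<times> zn_vectors n2"
    then obtain a b where p: "p = (a, b)" "a \<in> zn_vectors n1" "b \<in> zn_vectors n2"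
      by blast
    obtain x where "vec_mod x n1 = a" "vec_mod x n2 = b"
      using vec_mod_chinese_remainder[OF assms(3), of a b] p(2,3) by (auto simp: vec_mod_zn_vectors)
    then have "p = (vec_mod (vec_mod x (n1 * n2)) n1, vec_mod (vec_mod x (n1 * n2)) n2)"
      using p(1) by (simp add: vec_mod_vec_mod_dvd)
    moreover have "vec_mod x (n1 * n2) \<in> zn_vectors (n1 * n2)"
      using assms(1,2) by (simp add: vec_mod_in_zn_vectors)
    ultimately show "p \<in> ?f ` zn_vectors (n1 * n2)"
      by blast
  qed
qed

lemma fst_move_graph: "fst (move_graph M n) = zn_vectors n"
  by (simp add: move_graph_def)

lemma move_graph_arc_iff:
  "(x, y) \<in> snd (move_graph M n) \<longleftrightarrow>
     x \<in> zn_vectors n \<and> y \<in> zn_vectors n \<and> y = vec_mod (M *v x) n"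
  by (auto simp: move_graph_def vec_mod_def vec_eq_iff)

lemma move_graph_arc_iff_coprime_factors:
  assumes "n1 > 0" "n2 > 0" "coprime n1 n2"
    and "x \<in> zn_vectors (n1 * n2)" "y \<in> zn_vectors (n1 * n2)"
  shows "(x, y) \<in> snd (move_graph M (n1 * n2)) \<longleftrightarrow>
           (vec_mod x n1, vec_mod y n1) \<in> snd (move_graph M n1) \<and>
           (vec_mod x n2, vec_mod y n2) \<in> snd (move_graph M n2)"
proof -
  have "y = vec_mod (M *v x) (n1 * n2) \<longleftrightarrow>
        vec_mod y n1 = vec_mod (M *v x) n1 \<and> vec_mod y n2 = vec_mod (M *v x) n2"
    using vec_mod_mult_eq_iff[OF assms(3)] vec_mod_zn_vectors[OF assms(5)] by metis
  then show ?thesis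
    using assms by (simp add: move_graph_arc_iff vec_mod_in_zn_vectors vec_mod_matrix_vector_mult)
qed

theorem theorem3p4:
  fixes M :: "int ^ 'm ^ 'm" and n1 n2 :: nat
  assumes "n1 \<ge> 1" and "n2 \<ge> 1" and "coprime n1 n2"
  shows "digraph_iso (move_graph M (n1 * n2))
           (tensor_product (move_graph M n1) (move_graph M n2))"
proof -
  have pos: "n1 > 0" "n2 > 0"
    using assms(1,2) by simp_all
  show ?thesis
    unfolding digraph_iso_def
  proof (intro exI conjI ballI)
    show "bij_betw (\<lambda>x. (vec_mod x n1, vec_mod x n2)) (fst (move_graph M (n1 * n2)))
            (fst (tensor_product (move_graph M n1) (move_graph M n2)))"
      using bij_betw_vec_mod_pair[OF pos assms(3)] by (simp add: fst_move_graph tensor_product_def)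
  next
    fix u w assume "u \<in> fst (move_graph M (n1 * n2))" "w \<in> fst (move_graph M (n1 * n2))"
    then show "(u, w) \<in> snd (move_graph M (n1 * n2)) \<longleftrightarrow>
        ((vec_mod u n1, vec_mod u n2), (vec_mod w n1, vec_mod w n2))
          \<in> snd (tensor_product (move_graph M n1) (move_graph M n2))"
      using move_graph_arc_iff_coprime_factors[OF pos assms(3)]
      by (simp add: fst_move_graph tensor_product_def)
  qed
qed

end
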